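(* For every graph $G$, $\mathrm{tn}(G)\le \mathrm{bn}(G)\le 2\,\mathrm{tn}(G)$.
   Context: Two subgraphs $A,B$ of $G$ touch if they share a vertex or some edge of $G$ has one endpoint in $A$ and the other in $B$. A bramble is a set of connected subgraphs of $G$ that pairwise touch; its order is the minimum size of a set of vertices meeting every element (a hitting set); $\mathrm{bn}(G)$ is the maximum order of a bramble in $G$. A tangle is a set $\tau$ of connected subgraphs of $G$ such that for all $A,B,C\in\tau$ there is either a vertex of $G$ in $A\cap B\cap C$, or an edge $e$ of $G$ such that each of $A,B,C$ contains at least one endpoint of $e$. (Every tangle is a bramble.) The order of a tangle is its order as a bramble, and the tangle number $\mathrm{tn}(G)$ is the maximum order of a tangle in $G$. *)

theory Defs
  imports Main
begin

(* A finite graph: finite vertex set V, edge set E given as a symmetric,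
   irreflexive relation on V (each undirected edge uv appears as (u,v) and (v,u)). *)
definition graph :: "'a set \<Rightarrow> ('a \<times> 'a) set \<Rightarrow> bool" where
  "graph V E \<longleftrightarrow> finite V \<and> E \<subseteq> V \<times> V \<and> sym E \<and> irrefl E"

definition subgraph :: "'a set \<Rightarrow> ('a \<times> 'a) set \<Rightarrow> 'a set \<times> ('a \<times> 'a) set \<Rightarrow> bool" where
  "subgraph V E H \<longleftrightarrow> fst H \<subseteq> V \<and> snd H \<subseteq> E \<and> snd H \<subseteq> fst H \<times> fst H \<and> sym (snd H)"

definition connected_subgraph :: "'a set \<Rightarrow> ('a \<times> 'a) set \<Rightarrow> 'a set \<times> ('a \<times> 'a) set \<Rightarrow> bool" where
  "connected_subgraph V E H \<longleftrightarrow> subgraph V E H \<and> fst H \<noteq> {} \<and>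
     (\<forall>x\<in>fst H. \<forall>y\<in>fst H. (x, y) \<in> (snd H)\<^sup>*)"

definition touch :: "('a \<times> 'a) set \<Rightarrow> 'a set \<times> ('a \<times> 'a) set \<Rightarrow> 'a set \<times> ('a \<times> 'a) set \<Rightarrow> bool" where
  "touch E A B \<longleftrightarrow> fst A \<inter> fst B \<noteq> {} \<or> (\<exists>(u, v)\<in>E. u \<in> fst A \<and> v \<in> fst B)"

definition bramble :: "'a set \<Rightarrow> ('a \<times> 'a) set \<Rightarrow> ('a set \<times> ('a \<times> 'a) set) set \<Rightarrow> bool" where
  "bramble V E \<B> \<longleftrightarrow> (\<forall>H\<in>\<B>. connected_subgraph V E H) \<and> (\<forall>A\<in>\<B>. \<forall>B\<in>\<B>. touch E A B)"

definition tangle :: "'a set \<Rightarrow> ('a \<times> 'a) set \<Rightarrow> ('a set \<times> ('a \<times> 'a) set) set \<Rightarrow> bool" where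
  "tangle V E \<T> \<longleftrightarrow> (\<forall>H\<in>\<T>. connected_subgraph V E H) \<and>
     (\<forall>A\<in>\<T>. \<forall>B\<in>\<T>. \<forall>C\<in>\<T>.
        fst A \<inter> fst B \<inter> fst C \<noteq> {} \<or>
        (\<exists>(u, v)\<in>E. (u \<in> fst A \<or> v \<in> fst A) \<and> (u \<in> fst B \<or> v \<in> fst B) \<and> (u \<in> fst C \<or> v \<in> fst C)))"

definition hitting_set :: "'a set \<Rightarrow> ('a set \<times> ('a \<times> 'a) set) set \<Rightarrow> 'a set \<Rightarrow> bool" where
  "hitting_set V \<B> S \<longleftrightarrow> S \<subseteq> V \<and> (\<forall>H\<in>\<B>. S \<inter> fst H \<noteq> {})"

definition bramble_order :: "'a set \<Rightarrow> ('a set \<times> ('a \<times> 'a) set) set \<Rightarrow> nat" where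
  "bramble_order V \<B> = Min {card S | S. hitting_set V \<B> S}"

definition bn :: "'a set \<Rightarrow> ('a \<times> 'a) set \<Rightarrow> nat" where
  "bn V E = Max {bramble_order V \<B> | \<B>. bramble V E \<B>}"

definition tn :: "'a set \<Rightarrow> ('a \<times> 'a) set \<Rightarrow> nat" where
  "tn V E = Max {bramble_order V \<T> | \<T>. tangle V E \<T>}"

end

theory Submission
  imports Defs
begin

text \<open>Trivially every tangle is a bramble. Conversely, let \<open>\<B>\<close> be a bramble of order \<open>k\<close>.
  For every vertex set \<open>S\<close> with \<open>2 |S| < k\<close> take the subgraph induced by the union of
  all elements of \<open>\<B>\<close> avoiding \<open>S\<close>; it is connected, since the elements are connected
  and pairwise touch. Any three such subgraphs, for \<open>S\<^sub>1, S\<^sub>2, S\<^sub>3\<close>, satisfy the tangle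
  condition: as \<open>|S\<^sub>1 \<union> S\<^sub>2| < k\<close>, some \<open>A \<in> \<B>\<close> avoids \<open>S\<^sub>1 \<union> S\<^sub>2\<close> and lies in the first
  two, some \<open>A' \<in> \<B>\<close> lies in the third, and \<open>A\<close>, \<open>A'\<close> touch. The subgraph for \<open>S\<close>
  misses \<open>S\<close>, so every hitting set \<open>S\<close> of this tangle has \<open>2 |S| \<ge> k\<close>.\<close>

definition induced_subgraph :: "('a \<times> 'a) set \<Rightarrow> 'a set \<Rightarrow> 'a set \<times> ('a \<times> 'a) set" where
  "induced_subgraph E W = (W, E \<inter> W \<times> W)"

definition avoiding :: "('a set \<times> ('a \<times> 'a) set) set \<Rightarrow> 'a set \<Rightarrow> ('a set \<times> ('a \<times> 'a) set) set" where
  "avoiding \<B> S = {A \<in> \<B>. fst A \<inter> S = {}}"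

definition bramble_tangle ::
  "'a set \<Rightarrow> ('a \<times> 'a) set \<Rightarrow> ('a set \<times> ('a \<times> 'a) set) set \<Rightarrow> ('a set \<times> ('a \<times> 'a) set) set" where
  "bramble_tangle V E \<B> =
     (\<lambda>S. induced_subgraph E (\<Union>(fst ` avoiding \<B> S))) ` {S. S \<subseteq> V \<and> 2 * card S < bramble_order V \<B>}"

lemma finite_connected_subgraph_families:
  assumes "graph V E"
  shows "finite {\<B>. \<forall>H\<in>\<B>. connected_subgraph V E H}"
proof (rule finite_subset)
  show "{\<B>. \<forall>H\<in>\<B>. connected_subgraph V E H} \<subseteq> Pow (Pow V \<times> Pow E)"
    unfolding connected_subgraph_def subgraph_def by fastforce
  have "finite E"
    using assms unfolding graph_def by (auto intro: finite_subset[of E "V \<times> V"])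
  then show "finite (Pow (Pow V \<times> Pow E))"
    using assms unfolding graph_def by simp
qed

lemma finite_orders_of_connected_families:
  assumes "graph V E" and "\<And>\<B>. P \<B> \<Longrightarrow> \<forall>H\<in>\<B>. connected_subgraph V E H"
  shows "finite {bramble_order V \<B> | \<B>. P \<B>}"
proof -
  have "{bramble_order V \<B> | \<B>. P \<B>} \<subseteq> bramble_order V ` {\<B>. \<forall>H\<in>\<B>. connected_subgraph V E H}"
    using assms(2) by auto
  then show ?thesis
    using finite_connected_subgraph_families[OF assms(1)] by (meson finite_imageI finite_subset)
qed

lemma tangle_imp_bramble:
  assumes "sym E" and "tangle V E \<T>"
  shows "bramble V E \<T>"
  using assms unfolding tangle_def bramble_def touch_def by (fastforce dest: symD)

lemma bramble_avoiding: "bramble V E \<B> \<Longrightarrow> bramble V E (avoiding \<B> S)"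
  unfolding bramble_def avoiding_def by auto

lemma finite_hitting_set_cards: "finite V \<Longrightarrow> finite {card S | S. hitting_set V \<B> S}"
proof (rule finite_subset)
  show "{card S | S. hitting_set V \<B> S} \<subseteq> card ` Pow V"
    unfolding hitting_set_def by auto
qed simp

lemma bramble_order_le_card:
  assumes "finite V" and "hitting_set V \<B> S"
  shows "bramble_order V \<B> \<le> card S"
  unfolding bramble_order_def using finite_hitting_set_cards[OF assms(1)] assms(2)
  by (auto intro: Min_le)

lemma bramble_order_attained:
  assumes "finite V" and "hitting_set V \<B> V"
  obtains S where "hitting_set V \<B> S" and "card S = bramble_order V \<B>"
proof -
  have "bramble_order V \<B> \<in> {card S | S. hitting_set V \<B> S}"
    unfolding bramble_order_def using finite_hitting_set_cards[OF assms(1)] assms(2)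
    by (intro Min_in) auto
  then show ?thesis using that by force
qed

lemma hitting_set_carrier:
  "\<forall>H\<in>\<B>. connected_subgraph V E H \<Longrightarrow> hitting_set V \<B> V"
  unfolding hitting_set_def connected_subgraph_def subgraph_def by blast

lemma small_set_avoided:
  assumes "finite V" and "S \<subseteq> V" and "card S < bramble_order V \<B>"
  shows "avoiding \<B> S \<noteq> {}"
proof
  assume "avoiding \<B> S = {}"
  then have "hitting_set V \<B> S"
    using assms(2) unfolding hitting_set_def avoiding_def by blast
  then show False
    using bramble_order_le_card[OF assms(1)] assms(3) by fastforce
qed

lemma element_path_in_union:
  assumes "connected_subgraph V E A" and "fst A \<subseteq> W" and "a \<in> fst A" and "b \<in> fst A"
  shows "(a, b) \<in> (E \<inter> W \<times> W)\<^sup>*"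
proof -
  have "(a, b) \<in> (snd A)\<^sup>*"
    using assms(1,3,4) unfolding connected_subgraph_def by blast
  moreover have "snd A \<subseteq> E \<inter> W \<times> W"
    using assms(1,2) unfolding connected_subgraph_def subgraph_def by blast
  ultimately show ?thesis using rtrancl_mono by blast
qed

lemma connected_subgraph_bramble_union:
  assumes "sym E" and "bramble V E \<B>" and "\<B> \<noteq> {}"
  shows "connected_subgraph V E (induced_subgraph E (\<Union>(fst ` \<B>)))"
proof -
  let ?W = "\<Union>(fst ` \<B>)"
  let ?R = "E \<inter> ?W \<times> ?W"
  have conn: "\<And>A. A \<in> \<B> \<Longrightarrow> connected_subgraph V E A"
    using assms(2) unfolding bramble_def by blast
  have path: "(a, b) \<in> ?R\<^sup>*" if "A \<in> \<B>" "a \<in> fst A" "b \<in> fst A" for A a b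
  proof -
    have "fst A \<subseteq> ?W" using that(1) by blast
    then show ?thesis using element_path_in_union[OF conn[OF that(1)] _ that(2,3)] by blast
  qed
  have touching_path: "(x, y) \<in> ?R\<^sup>*"
    if A: "A \<in> \<B>" "x \<in> fst A" and A': "A' \<in> \<B>" "y \<in> fst A'" for A A' x y
  proof -
    have "touch E A A'" using assms(2) A(1) A'(1) unfolding bramble_def by blast
    then show ?thesis unfolding touch_def
    proof
      assume "fst A \<inter> fst A' \<noteq> {}"
      then obtain z where z: "z \<in> fst A" "z \<in> fst A'" by blast
      show ?thesis using path[OF A z(1)] path[OF A'(1) z(2) A'(2)] by (rule rtrancl_trans)
    next
      assume "\<exists>(u, v)\<in>E. u \<in> fst A \<and> v \<in> fst A'"
      then obtain u v where uv: "(u, v) \<in> E" "u \<in> fst A" "v \<in> fst A'" by blast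
      then have "(u, v) \<in> ?R" using A(1) A'(1) by blast
      with path[OF A uv(2)] have "(x, v) \<in> ?R\<^sup>*" by (rule rtrancl_into_rtrancl)
      then show ?thesis using path[OF A'(1) uv(3) A'(2)] by (rule rtrancl_trans)
    qed
  qed
  have "\<forall>x\<in>?W. \<forall>y\<in>?W. (x, y) \<in> ?R\<^sup>*"
  proof (intro ballI)
    fix x y assume "x \<in> ?W" "y \<in> ?W"
    then obtain A A' where "A \<in> \<B>" "x \<in> fst A" "A' \<in> \<B>" "y \<in> fst A'" by blast
    then show "(x, y) \<in> ?R\<^sup>*" by (rule touching_path)
  qed
  moreover have "?W \<subseteq> V"
  proof (rule UN_least)
    fix A assume "A \<in> \<B>"
    then show "fst A \<subseteq> V" using conn unfolding connected_subgraph_def subgraph_def by simp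
  qed
  moreover have "?W \<noteq> {}"
  proof -
    obtain A where "A \<in> \<B>" using assms(3) by blast
    moreover from this have "fst A \<noteq> {}"
      using conn unfolding connected_subgraph_def by simp
    ultimately show ?thesis by blast
  qed
  moreover have "sym ?R"
    using assms(1) unfolding sym_def by blast
  ultimately show ?thesis
    unfolding connected_subgraph_def subgraph_def induced_subgraph_def by simp
qed

lemma tangle_condition_of_touching:
  assumes "touch E A A'" and "fst A \<subseteq> fst H\<^sub>1" "fst A \<subseteq> fst H\<^sub>2" "fst A' \<subseteq> fst H\<^sub>3"
  shows "fst H\<^sub>1 \<inter> fst H\<^sub>2 \<inter> fst H\<^sub>3 \<noteq> {} \<or>
    (\<exists>(u, v)\<in>E. (u \<in> fst H\<^sub>1 \<or> v \<in> fst H\<^sub>1) \<and> (u \<in> fst H\<^sub>2 \<or> v \<in> fst H\<^sub>2) \<and>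
      (u \<in> fst H\<^sub>3 \<or> v \<in> fst H\<^sub>3))"
  using assms(1) unfolding touch_def
proof
  assume "fst A \<inter> fst A' \<noteq> {}"
  then have "fst H\<^sub>1 \<inter> fst H\<^sub>2 \<inter> fst H\<^sub>3 \<noteq> {}" using assms(2-4) by blast
  then show ?thesis ..
next
  assume "\<exists>(u, v)\<in>E. u \<in> fst A \<and> v \<in> fst A'"
  then obtain u v where "(u, v) \<in> E" "u \<in> fst A" "v \<in> fst A'" by blast
  then show ?thesis using assms(2-4) by (intro disjI2 bexI[of _ "(u, v)"]) auto
qed

lemma bramble_tangle_is_tangle:
  assumes "graph V E" and "bramble V E \<B>"
  shows "tangle V E (bramble_tangle V E \<B>)"
proof -
  have fin: "finite V" and "sym E" using assms(1) unfolding graph_def by auto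
  show ?thesis unfolding tangle_def
  proof (intro conjI ballI)
    fix H assume "H \<in> bramble_tangle V E \<B>"
    then obtain S where "S \<subseteq> V" "card S < bramble_order V \<B>"
      and "H = induced_subgraph E (\<Union>(fst ` avoiding \<B> S))"
      unfolding bramble_tangle_def by auto
    then show "connected_subgraph V E H"
      using connected_subgraph_bramble_union[OF \<open>sym E\<close> bramble_avoiding[OF assms(2)]]
        small_set_avoided[OF fin] by blast
  next
    fix H\<^sub>1 H\<^sub>2 H\<^sub>3 assume "H\<^sub>1 \<in> bramble_tangle V E \<B>" "H\<^sub>2 \<in> bramble_tangle V E \<B>"
      "H\<^sub>3 \<in> bramble_tangle V E \<B>"
    then obtain S\<^sub>1 S\<^sub>2 S\<^sub>3 where S: "S\<^sub>1 \<subseteq> V" "S\<^sub>2 \<subseteq> V" "S\<^sub>3 \<subseteq> V"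
      "2 * card S\<^sub>1 < bramble_order V \<B>" "2 * card S\<^sub>2 < bramble_order V \<B>"
      "2 * card S\<^sub>3 < bramble_order V \<B>"
      and H: "H\<^sub>1 = induced_subgraph E (\<Union>(fst ` avoiding \<B> S\<^sub>1))"
        "H\<^sub>2 = induced_subgraph E (\<Union>(fst ` avoiding \<B> S\<^sub>2))"
        "H\<^sub>3 = induced_subgraph E (\<Union>(fst ` avoiding \<B> S\<^sub>3))"
      unfolding bramble_tangle_def by blast
    have "card (S\<^sub>1 \<union> S\<^sub>2) < bramble_order V \<B>"
      using card_Un_le[of S\<^sub>1 S\<^sub>2] S(4,5) by linarith
    then obtain A where "A \<in> avoiding \<B> (S\<^sub>1 \<union> S\<^sub>2)"
      using small_set_avoided[OF fin] S(1,2) by blast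
    then have A: "A \<in> \<B>" "fst A \<subseteq> fst H\<^sub>1" "fst A \<subseteq> fst H\<^sub>2"
      unfolding H induced_subgraph_def avoiding_def by auto
    have "card S\<^sub>3 < bramble_order V \<B>" using S(6) by linarith
    then obtain A' where "A' \<in> avoiding \<B> S\<^sub>3"
      using small_set_avoided[OF fin S(3)] by blast
    then have A': "A' \<in> \<B>" "fst A' \<subseteq> fst H\<^sub>3"
      unfolding H induced_subgraph_def avoiding_def by auto
    have "touch E A A'" using assms(2) A(1) A'(1) unfolding bramble_def by blast
    then show "fst H\<^sub>1 \<inter> fst H\<^sub>2 \<inter> fst H\<^sub>3 \<noteq> {} \<or>
      (\<exists>(u, v)\<in>E. (u \<in> fst H\<^sub>1 \<or> v \<in> fst H\<^sub>1) \<and> (u \<in> fst H\<^sub>2 \<or> v \<in> fst H\<^sub>2) \<and>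
        (u \<in> fst H\<^sub>3 \<or> v \<in> fst H\<^sub>3))"
      using A(2,3) A'(2) by (rule tangle_condition_of_touching)
  qed
qed

lemma bramble_order_le_double_bramble_tangle:
  assumes "graph V E" and "bramble V E \<B>"
  shows "bramble_order V \<B> \<le> 2 * bramble_order V (bramble_tangle V E \<B>)"
proof -
  have fin: "finite V" using assms(1) unfolding graph_def by auto
  have "\<forall>H\<in>bramble_tangle V E \<B>. connected_subgraph V E H"
    using bramble_tangle_is_tangle[OF assms] unfolding tangle_def by (elim conjE)
  then obtain S where S: "hitting_set V (bramble_tangle V E \<B>) S"
    and card: "card S = bramble_order V (bramble_tangle V E \<B>)"
    using bramble_order_attained[OF fin hitting_set_carrier] by blast
  have "\<not> 2 * card S < bramble_order V \<B>"
  proof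
    assume "2 * card S < bramble_order V \<B>"
    moreover have "S \<subseteq> V" using S unfolding hitting_set_def by simp
    ultimately have "induced_subgraph E (\<Union>(fst ` avoiding \<B> S)) \<in> bramble_tangle V E \<B>"
      unfolding bramble_tangle_def by blast
    then have "S \<inter> fst (induced_subgraph E (\<Union>(fst ` avoiding \<B> S))) \<noteq> {}"
      using S unfolding hitting_set_def by blast
    then show False unfolding induced_subgraph_def avoiding_def by auto
  qed
  then show ?thesis using card by simp
qed

lemma finite_bramble_orders: "graph V E \<Longrightarrow> finite {bramble_order V \<B> | \<B>. bramble V E \<B>}"
  by (erule finite_orders_of_connected_families) (simp add: bramble_def)

lemma finite_tangle_orders: "graph V E \<Longrightarrow> finite {bramble_order V \<T> | \<T>. tangle V E \<T>}"
  by (erule finite_orders_of_connected_families) (simp add: tangle_def)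

lemma bn_attained:
  assumes "graph V E"
  obtains \<B> where "bramble V E \<B>" and "bn V E = bramble_order V \<B>"
proof -
  have "bramble V E {}" unfolding bramble_def by simp
  then have "bn V E \<in> {bramble_order V \<B> | \<B>. bramble V E \<B>}"
    unfolding bn_def using finite_bramble_orders[OF assms] by (intro Max_in) blast+
  then show ?thesis using that by blast
qed

lemma tn_attained:
  assumes "graph V E"
  obtains \<T> where "tangle V E \<T>" and "tn V E = bramble_order V \<T>"
proof -
  have "tangle V E {}" unfolding tangle_def by simp
  then have "tn V E \<in> {bramble_order V \<T> | \<T>. tangle V E \<T>}"
    unfolding tn_def using finite_tangle_orders[OF assms] by (intro Max_in) blast+
  then show ?thesis using that by blast
qed

lemma bramble_order_le_bn:
  "graph V E \<Longrightarrow> bramble V E \<B> \<Longrightarrow> bramble_order V \<B> \<le> bn V E"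
  unfolding bn_def by (rule Max_ge) (blast intro: finite_bramble_orders)+

lemma tangle_order_le_tn:
  "graph V E \<Longrightarrow> tangle V E \<T> \<Longrightarrow> bramble_order V \<T> \<le> tn V E"
  unfolding tn_def by (rule Max_ge) (blast intro: finite_tangle_orders)+

theorem lemma10:
  fixes V :: "'a set" and E :: "('a \<times> 'a) set"
  assumes "graph V E"
  shows "tn V E \<le> bn V E \<and> bn V E \<le> 2 * tn V E"
proof
  have "sym E" using assms unfolding graph_def by simp
  obtain \<T> where \<T>: "tangle V E \<T>" and "tn V E = bramble_order V \<T>"
    using tn_attained[OF assms] .
  moreover have "bramble_order V \<T> \<le> bn V E"
    using bramble_order_le_bn[OF assms tangle_imp_bramble[OF \<open>sym E\<close> \<T>]] .
  ultimately show "tn V E \<le> bn V E" by simp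
next
  obtain \<B> where \<B>: "bramble V E \<B>" and "bn V E = bramble_order V \<B>"
    using bn_attained[OF assms] .
  moreover have "bramble_order V \<B> \<le> 2 * bramble_order V (bramble_tangle V E \<B>)"
    using bramble_order_le_double_bramble_tangle[OF assms \<B>] .
  moreover have "bramble_order V (bramble_tangle V E \<B>) \<le> tn V E"
    using tangle_order_le_tn[OF assms bramble_tangle_is_tangle[OF assms \<B>]] .
  ultimately show "bn V E \<le> 2 * tn V E" by simp
qed

end
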